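(* Let $\Gamma$ be a lattice with periodic boundary conditions as below, let $\mathcal{X}$ be an artificial boundary, let $S_E\subseteq C_1(\Gamma)$ be the set of edges carrying nonzero syndrome of some bit-flip error, i.e. $S_E=\partial(F_0)$ for some set of faces $F_0$, and let $\mathcal{E}$ be the set of faces returned by Procedure P5 on input $(S_E,\mathcal{X})$. Then: (a) (Existence) there exists a set of faces $\hat{\mathcal{E}}\subseteq\mathcal{E}\cup\mathcal{X}$ with $\partial(\hat{\mathcal{E}})=S_E$; (b) (Uniqueness) if $\hat{\mathcal{E}}_1,\hat{\mathcal{E}}_2\subseteq\mathcal{E}\cup\mathcal{X}$ satisfy $\partial(\hat{\mathcal{E}}_1)=\partial(\hat{\mathcal{E}}_2)=S_E$, then $\hat{\mathcal{E}}_1\triangle\hat{\mathcal{E}}_2\subseteq\mathcal{X}$, i.e. $\hat{\mathcal{E}}_1\setminus\mathcal{X}=\hat{\mathcal{E}}_2\setminus\mathcal{X}$.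
   Context: $\Gamma$ is a finite, connected three-dimensional cell complex without boundary (periodic boundary conditions), with edges $C_1(\Gamma)$, faces $C_2(\Gamma)$, volumes $C_3(\Gamma)$; every face lies in the boundary of exactly two distinct volumes and the dual complex is connected. $\partial(f)$ is the set of boundary edges of face $f$, $\partial(\nu)$ the set of boundary faces of volume $\nu$, $\iota(e)$ the set of faces containing edge $e$; for a set of faces $F$, $\partial(F)$ is the symmetric difference of the $\partial(f)$, $f\in F$, and $\triangle$ denotes symmetric difference. The 3D toric code on $\Gamma$ has one qubit per face, stabilizer group generated by $B_e=\prod_{f\in\iota(e)}Z_f$ and $A_\nu=\prod_{f\in\partial(\nu)}X_f$, and encodes $k$ logical qubits; a logical operator is a Pauli operator commuting with all stabilizers but not in the stabilizer group (up to phase); $X_S=\prod_{f\in S}X_f$. Fix $X$-type logical operators $\bar X_1,\dots,\bar X_k$, one per logical qubit. An artificial boundary is a set $\mathcal{X}=\bigcup_{i=1}^k\mathrm{supp}(\bar X_i^r)$, where each $\bar X_i^r$ is an $X$-type operator with $\bar X_i^r\bar X_i$ an $X$-type stabilizer, such that $\mathcal{X}$ contains no nonempty set $S$ with $X_S$ a stabilizer. A face path is a sequence of faces $\rho=(f_1,\dots,f_m)$ with pairwise distinct volumes $\Lambda(\rho)=(\nu_1,\dots,\nu_{m-1})$, $f_i,f_{i+1}\in\partial(\nu_i)$. A set of faces $K$ is a cut set of $\Gamma$ if there exist volumes $\nu,\nu'$ such that every face path $\rho$ with $f_1\in\partial(\nu)$, $f_m\in\partial(\nu')$, $\nu,\nu'\notin\Lambda(\rho)$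 meets $K$. Procedure P5 (input $S_E,\mathcal{X}$): set $\mathcal{E}=\emptyset$, $B=S_E$, all faces unexplored. Repeat rounds until all faces of $C_2(\Gamma)\setminus\mathcal{X}$ are explored: set $B'=\emptyset$; for each unexplored face $f\in C_2(\Gamma)\setminus\mathcal{X}$ with $\partial(f)\cap B\ne\emptyset$, mark $f$ explored and, if $\mathcal{X}\cup\mathcal{E}\cup\{f\}$ is not a cut set of $\Gamma$, set $\mathcal{E}\leftarrow\mathcal{E}\cup\{f\}$ and $B'\leftarrow B'\cup\partial(f)$; at the end of the round set $B\leftarrow B'\setminus B$. It is assumed that the procedure terminates with every face of $C_2(\Gamma)\setminus\mathcal{X}$ explored; it returns $\mathcal{E}$ (so $\mathcal{E}\cap\mathcal{X}=\emptyset$). *)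

theory Defs
  imports Main
begin

text \<open>For I a set of faces and A = boundary-of-face this is the paper's
boundary of a set of faces; for I a set of volumes it is the mod-2 sum of volume boundaries.\<close>
definition sdsum :: "('i \<Rightarrow> 'a set) \<Rightarrow> 'i set \<Rightarrow> 'a set" where
  "sdsum A I = {x. odd (card {i \<in> I. x \<in> A i})}"

definition symdiff :: "'a set \<Rightarrow> 'a set \<Rightarrow> 'a set" where
  "symdiff S T = (S - T) \<union> (T - S)"

text \<open>P = vertices (0-cells), E = edges, F = faces, V = volumes;
 bde e = boundary vertices of edge e, bdf f = boundary edges of face f,
 bdv v = boundary faces of volume v.\<close>
definition periodic_cell_complex ::
  "'p set \<Rightarrow> 'e set \<Rightarrow> 'f set \<Rightarrow> 'v set \<Rightarrow> ('e \<Rightarrow> 'p set) \<Rightarrow> ('f \<Rightarrow> 'e set) \<Rightarrow> ('v \<Rightarrow> 'f set) \<Rightarrow> bool"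
where
  "periodic_cell_complex P E F V bde bdf bdv \<longleftrightarrow>
     finite P \<and> finite E \<and> finite F \<and> finite V \<and>
     (\<forall>e\<in>E. bde e \<subseteq> P \<and> bde e \<noteq> {} \<and> card (bde e) \<le> 2) \<and>
     (\<forall>f\<in>F. bdf f \<subseteq> E) \<and>
     (\<forall>v\<in>V. bdv v \<subseteq> F) \<and>
     \<comment> \<open>chain complex condition: boundary of boundary of a volume vanishes mod 2\<close>
     (\<forall>v\<in>V. sdsum bdf (bdv v) = {}) \<and>
     \<comment> \<open>no boundary: every face lies in the boundary of exactly two distinct volumes\<close>
     (\<forall>f\<in>F. card {v \<in> V. f \<in> bdv v} = 2) \<and>
     \<comment> \<open>connected (1-skeleton)\<close>
     (\<forall>u\<in>P. \<forall>w\<in>P. (u, w) \<in> {(a, b). \<exists>e\<in>E. a \<in> bde e \<and> b \<in> bde e}\<^sup>*) \<and>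
     \<comment> \<open>dual complex connected\<close>
     (\<forall>v\<in>V. \<forall>w\<in>V. (v, w) \<in> {(a, b). a \<in> V \<and> b \<in> V \<and> (\<exists>f\<in>F. f \<in> bdv a \<and> f \<in> bdv b)}\<^sup>*)"

text \<open>X_S is (up to phase) in the stabilizer group iff S is a mod-2 sum of volume boundaries (product of A_v).\<close>
definition x_stab :: "'v set \<Rightarrow> ('v \<Rightarrow> 'f set) \<Rightarrow> 'f set \<Rightarrow> bool" where
  "x_stab V bdv S \<longleftrightarrow> (\<exists>W \<subseteq> V. S = sdsum bdv W)"

text \<open>X_S commutes with all stabilizers iff it commutes with every B_e, i.e. its
 (mod 2) boundary is empty; it is a logical operator if moreover it is not a stabilizer.\<close>
definition x_logical :: "'f set \<Rightarrow> 'v set \<Rightarrow> ('f \<Rightarrow> 'e set) \<Rightarrow> ('v \<Rightarrow> 'f set) \<Rightarrow> 'f set \<Rightarrow> bool" where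
  "x_logical F V bdf bdv S \<longleftrightarrow> S \<subseteq> F \<and> sdsum bdf S = {} \<and> \<not> x_stab V bdv S"

text \<open>Lx 0, ..., Lx (k-1): one X-type logical operator per logical qubit, i.e. their classes
 form a basis of the X-type logical operators modulo X-type stabilizers (k = number of
 encoded qubits).\<close>
definition x_logical_basis ::
  "'f set \<Rightarrow> 'v set \<Rightarrow> ('f \<Rightarrow> 'e set) \<Rightarrow> ('v \<Rightarrow> 'f set) \<Rightarrow> nat \<Rightarrow> (nat \<Rightarrow> 'f set) \<Rightarrow> bool"
where
  "x_logical_basis F V bdf bdv k Lx \<longleftrightarrow>
     (\<forall>i<k. x_logical F V bdf bdv (Lx i)) \<and>
     (\<forall>I \<subseteq> {..<k}. I \<noteq> {} \<longrightarrow> \<not> x_stab V bdv (sdsum Lx I)) \<and>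
     (\<forall>S \<subseteq> F. sdsum bdf S = {} \<longrightarrow> (\<exists>I \<subseteq> {..<k}. x_stab V bdv (symdiff S (sdsum Lx I))))"

definition artificial_boundary ::
  "'f set \<Rightarrow> 'v set \<Rightarrow> ('v \<Rightarrow> 'f set) \<Rightarrow> nat \<Rightarrow> (nat \<Rightarrow> 'f set) \<Rightarrow> 'f set \<Rightarrow> bool"
where
  "artificial_boundary F V bdv k Lx Xb \<longleftrightarrow>
     (\<exists>Lr :: nat \<Rightarrow> 'f set.
        (\<forall>i<k. Lr i \<subseteq> F \<and> x_stab V bdv (symdiff (Lr i) (Lx i))) \<and>
        Xb = (\<Union>i<k. Lr i) \<and>
        (\<forall>S \<subseteq> Xb. S \<noteq> {} \<longrightarrow> \<not> x_stab V bdv S))"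

definition face_path :: "'f set \<Rightarrow> 'v set \<Rightarrow> ('v \<Rightarrow> 'f set) \<Rightarrow> 'f list \<Rightarrow> 'v list \<Rightarrow> bool" where
  "face_path F V bdv fs vs \<longleftrightarrow>
     length fs = Suc (length vs) \<and> set fs \<subseteq> F \<and> set vs \<subseteq> V \<and> distinct vs \<and>
     (\<forall>i < length vs. fs ! i \<in> bdv (vs ! i) \<and> fs ! Suc i \<in> bdv (vs ! i))"

definition is_cut_set :: "'f set \<Rightarrow> 'v set \<Rightarrow> ('v \<Rightarrow> 'f set) \<Rightarrow> 'f set \<Rightarrow> bool" where
  "is_cut_set F V bdv K \<longleftrightarrow>
     (\<exists>v\<in>V. \<exists>v'\<in>V. \<forall>fs vs. face_path F V bdv fs vs \<and> hd fs \<in> bdv v \<and> last fs \<in> bdv v'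
         \<and> v \<notin> set vs \<and> v' \<notin> set vs \<longrightarrow> set fs \<inter> K \<noteq> {})"

text \<open>One round scans the candidate faces in some order; the state is (E, B').\<close>
primrec p5_scan :: "('f set \<Rightarrow> bool) \<Rightarrow> ('f \<Rightarrow> 'e set) \<Rightarrow> 'f set \<Rightarrow> 'f list
    \<Rightarrow> 'f set \<times> 'e set \<Rightarrow> 'f set \<times> 'e set" where
  "p5_scan iscut bdf Xb [] st = st"
| "p5_scan iscut bdf Xb (f # fs) st =
     p5_scan iscut bdf Xb fs
       (if \<not> iscut (Xb \<union> fst st \<union> {f}) then (fst st \<union> {f}, snd st \<union> bdf f) else st)"

text \<open>Reachable states (explored faces U, current E, current B). A round is only executed
 while some face of F - Xb is unexplored; within a round the candidate faces may be processed
 in any order.\<close>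
inductive p5_reach :: "'f set \<Rightarrow> 'v set \<Rightarrow> ('f \<Rightarrow> 'e set) \<Rightarrow> ('v \<Rightarrow> 'f set) \<Rightarrow> 'e set \<Rightarrow> 'f set
    \<Rightarrow> 'f set \<times> 'f set \<times> 'e set \<Rightarrow> bool"
  for F V bdf bdv SE Xb where
  init: "p5_reach F V bdf bdv SE Xb ({}, {}, SE)"
| step: "p5_reach F V bdf bdv SE Xb (U, Ee, B) \<Longrightarrow> \<not> (F - Xb \<subseteq> U) \<Longrightarrow> distinct fs \<Longrightarrow>
         set fs = {f \<in> F - Xb. f \<notin> U \<and> bdf f \<inter> B \<noteq> {}} \<Longrightarrow>
         p5_scan (is_cut_set F V bdv) bdf Xb fs (Ee, {}) = (Ee', B') \<Longrightarrow>
         p5_reach F V bdf bdv SE Xb (U \<union> set fs, Ee', B' - B)"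

text \<open>Eout is a (possible) output of P5: a reachable state in which all faces of F - Xb
 are explored (the procedure is assumed to terminate this way).\<close>
definition p5_output :: "'f set \<Rightarrow> 'v set \<Rightarrow> ('f \<Rightarrow> 'e set) \<Rightarrow> ('v \<Rightarrow> 'f set) \<Rightarrow> 'e set \<Rightarrow> 'f set
    \<Rightarrow> 'f set \<Rightarrow> bool" where
  "p5_output F V bdf bdv SE Xb Eout \<longleftrightarrow>
     (\<exists>U B. p5_reach F V bdf bdv SE Xb (U, Eout, B) \<and> F - Xb \<subseteq> U)"

end

theory Submission
  imports Defs "HOL-Library.Transitive_Closure_Table"
begin

(*
  A set of faces is a cut set exactly when it contains a nonempty X-stabilizer, i.e. the
  coboundary of a nonempty proper set of volumes: such a coboundary separates its two sides,
  and conversely the volumes reachable from one end of a blocked face path through faces outside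
  the cut have their coboundary inside the cut. Hence P5 keeps X \<union> E free of nonempty
  stabilizers, and every face it rejects completes a stabilizer whose other faces already lie in
  X \<union> E.

  Existence: a face of F0 outside X \<union> E can be traded for the rest of such a stabilizer without
  changing the boundary. Uniqueness: two solutions differ by a cycle; modulo stabilizers this cycle
  is a sum of logical operators, hence of their representatives inside X. What is left is a
  stabilizer inside X \<union> E, which must be empty.
*)

section \<open>Mod-2 sums\<close>

lemma sdsum_empty [simp]: "sdsum A {} = {}"
  by (simp add: sdsum_def)

lemma sdsum_singleton [simp]: "sdsum A {i} = A i"
proof -
  have "{j \<in> {i}. x \<in> A j} = (if x \<in> A i then {i} else {})" for x by auto
  then show ?thesis by (simp add: sdsum_def)
qed

lemma sdsum_subset_UN: "sdsum A I \<subseteq> (\<Union>i\<in>I. A i)"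
  by (auto simp: sdsum_def dest!: odd_card_imp_not_empty)

lemma sdsum_Un_disjoint:
  assumes "finite I" "finite J" "I \<inter> J = {}"
  shows "sdsum A (I \<union> J) = symdiff (sdsum A I) (sdsum A J)"
proof -
  have "card {i \<in> I \<union> J. x \<in> A i} = card {i \<in> I. x \<in> A i} + card {i \<in> J. x \<in> A i}" for x
  proof -
    have "{i \<in> I \<union> J. x \<in> A i} = {i \<in> I. x \<in> A i} \<union> {i \<in> J. x \<in> A i}" by blast
    then show ?thesis using assms by (simp add: card_Un_disjoint disjoint_iff)
  qed
  then show ?thesis by (auto simp: sdsum_def symdiff_def)
qed

lemma sdsum_insert:
  assumes "finite I" "i \<notin> I"
  shows "sdsum A (insert i I) = symdiff (A i) (sdsum A I)"
  using sdsum_Un_disjoint[of "{i}" I A] assms by simp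

lemma sdsum_symdiff:
  assumes "finite I" "finite J"
  shows "sdsum A (symdiff I J) = symdiff (sdsum A I) (sdsum A J)"
proof -
  have split: "sdsum A X = symdiff (sdsum A (X - Y)) (sdsum A (X \<inter> Y))" if "finite X" for X Y
    using sdsum_Un_disjoint[of "X - Y" "X \<inter> Y" A] that by (simp add: Un_Diff_Int Diff_Int_distrib2)
  have "(I - J) \<inter> (J - I) = {}" by blast
  then have "sdsum A (symdiff I J) = symdiff (sdsum A (I - J)) (sdsum A (J - I))"
    using sdsum_Un_disjoint[of "I - J" "J - I" A] assms by (simp add: symdiff_def)
  moreover have "sdsum A I = symdiff (sdsum A (I - J)) (sdsum A (I \<inter> J))"
    using split[OF assms(1)] .
  moreover have "sdsum A J = symdiff (sdsum A (J - I)) (sdsum A (I \<inter> J))"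
    using split[OF assms(2), of I] by (metis Int_commute)
  ultimately show ?thesis by (auto simp: symdiff_def)
qed

lemma sdsum_symdiff_pointwise:
  assumes "finite I"
  shows "sdsum (\<lambda>i. symdiff (A i) (B i)) I = symdiff (sdsum A I) (sdsum B I)"
  using assms
proof induction
  case (insert i I)
  then show ?case by (simp add: sdsum_insert) (auto simp: symdiff_def)
qed (simp add: symdiff_def)

lemma symdiff_cancel: "symdiff (symdiff A C) (symdiff B C) = symdiff A B"
  by (auto simp: symdiff_def)

lemma face_path_nonempty: "face_path F V bdv fs vs \<Longrightarrow> fs \<noteq> []"
  by (auto simp: face_path_def)

lemma face_path_Nil: "face_path F V bdv fs [] \<longleftrightarrow> (\<exists>f\<in>F. fs = [f])"
  by (auto simp: face_path_def length_Suc_conv)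

lemma face_path_Cons:
  "face_path F V bdv (f # fs) (u # vs) \<longleftrightarrow>
     f \<in> F \<and> u \<in> V \<and> u \<notin> set vs \<and> f \<in> bdv u \<and> hd fs \<in> bdv u \<and> face_path F V bdv fs vs"
  unfolding face_path_def
  by (cases fs) (auto simp: less_Suc_eq_0_disj)

section \<open>X-type stabilizers\<close>

lemma artificial_boundary_subset: "artificial_boundary F V bdv k Lx Xb \<Longrightarrow> Xb \<subseteq> F"
  unfolding artificial_boundary_def by blast

locale cell_complex =
  fixes F :: "'f set" and V :: "'v set" and bdf :: "'f \<Rightarrow> 'e set" and bdv :: "'v \<Rightarrow> 'f set"
  assumes finite_faces: "finite F" and finite_volumes: "finite V"
    and bdv_subset: "v \<in> V \<Longrightarrow> bdv v \<subseteq> F"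
    and bdf_bdv: "v \<in> V \<Longrightarrow> sdsum bdf (bdv v) = {}"
begin

lemma sdsum_bdv_subset: "W \<subseteq> V \<Longrightarrow> sdsum bdv W \<subseteq> F"
  using sdsum_subset_UN[of bdv W] bdv_subset by blast

lemma sdsum_bdf_symdiff:
  "X \<subseteq> F \<Longrightarrow> Y \<subseteq> F \<Longrightarrow> sdsum bdf (symdiff X Y) = symdiff (sdsum bdf X) (sdsum bdf Y)"
  by (meson sdsum_symdiff finite_faces finite_subset)

lemma sdsum_bdf_sdsum_bdv:
  assumes "W \<subseteq> V"
  shows "sdsum bdf (sdsum bdv W) = {}"
proof -
  have "finite W" using assms finite_volumes finite_subset by blast
  then show ?thesis using assms
  proof induction
    case (insert w W)
    then show ?case
      using sdsum_bdf_symdiff[of "bdv w" "sdsum bdv W"] bdv_subset[of w] sdsum_bdv_subset[of W]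
        bdf_bdv[of w]
      by (simp add: sdsum_insert symdiff_def)
  qed simp
qed

lemma x_stab_subset: "x_stab V bdv S \<Longrightarrow> S \<subseteq> F"
  unfolding x_stab_def using sdsum_bdv_subset by blast

lemma x_stab_boundary: "x_stab V bdv S \<Longrightarrow> sdsum bdf S = {}"
  unfolding x_stab_def using sdsum_bdf_sdsum_bdv by blast

lemma x_stab_symdiff:
  assumes "x_stab V bdv S" "x_stab V bdv T"
  shows "x_stab V bdv (symdiff S T)"
proof -
  obtain W1 W2 where W: "W1 \<subseteq> V" "W2 \<subseteq> V" "S = sdsum bdv W1" "T = sdsum bdv W2"
    using assms unfolding x_stab_def by blast
  then have "finite W1" "finite W2" using finite_volumes finite_subset by blast+
  then have "symdiff S T = sdsum bdv (symdiff W1 W2)" using W by (simp add: sdsum_symdiff)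
  moreover have "symdiff W1 W2 \<subseteq> V" using W by (auto simp: symdiff_def)
  ultimately show ?thesis unfolding x_stab_def by blast
qed

lemma x_stab_sdsum:
  assumes "finite I" "\<And>i. i \<in> I \<Longrightarrow> x_stab V bdv (A i)"
  shows "x_stab V bdv (sdsum A I)"
  using assms
proof induction
  case empty
  show ?case unfolding x_stab_def by (intro exI[of _ "{}"]) simp
next
  case (insert i I)
  then show ?case by (simp add: sdsum_insert x_stab_symdiff)
qed

lemma cycle_equiv_subset_artificial_boundary:
  assumes basis: "x_logical_basis F V bdf bdv k Lx" and ab: "artificial_boundary F V bdv k Lx Xb"
    and D: "D \<subseteq> F" "sdsum bdf D = {}"
  obtains R where "R \<subseteq> Xb" "x_stab V bdv (symdiff D R)"
proof -
  have "\<forall>S \<subseteq> F. sdsum bdf S = {} \<longrightarrow> (\<exists>I \<subseteq> {..<k}. x_stab V bdv (symdiff S (sdsum Lx I)))"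
    using basis unfolding x_logical_basis_def by (elim conjE)
  from this[rule_format, OF D] obtain I
    where I: "I \<subseteq> {..<k}" "x_stab V bdv (symdiff D (sdsum Lx I))"
    by blast
  from ab obtain Lr where Lr: "\<And>i. i < k \<Longrightarrow> x_stab V bdv (symdiff (Lr i) (Lx i))"
    and Xb: "Xb = (\<Union>i<k. Lr i)"
    unfolding artificial_boundary_def by blast
  have "finite I" using I(1) finite_subset by blast
  then have "x_stab V bdv (sdsum (\<lambda>i. symdiff (Lr i) (Lx i)) I)"
    by (rule x_stab_sdsum) (use Lr I(1) in auto)
  then have "x_stab V bdv (symdiff (sdsum Lr I) (sdsum Lx I))"
    using sdsum_symdiff_pointwise[OF \<open>finite I\<close>, of Lr Lx] by simp
  from x_stab_symdiff[OF I(2) this] have "x_stab V bdv (symdiff D (sdsum Lr I))"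
    by (simp add: symdiff_cancel)
  moreover have "sdsum Lr I \<subseteq> Xb" using sdsum_subset_UN[of Lr I] I(1) Xb by blast
  ultimately show thesis using that by blast
qed

definition covered_by :: "'f set \<Rightarrow> 'f \<Rightarrow> bool" where
  "covered_by G f \<longleftrightarrow> f \<in> G \<or> (\<exists>S. x_stab V bdv S \<and> f \<in> S \<and> S \<subseteq> insert f G)"

lemma covered_by_mono: "covered_by G f \<Longrightarrow> G \<subseteq> G' \<Longrightarrow> covered_by G' f"
  unfolding covered_by_def by blast

text \<open>Replacing a face of F0 outside G by the other faces of a stabilizer covering it keeps the
  boundary and lowers the number of faces outside G.\<close>

lemma boundary_within_cover:
  assumes "G \<subseteq> F" and cover: "\<And>f. f \<in> F \<Longrightarrow> covered_by G f"
  shows "F0 \<subseteq> F \<Longrightarrow> \<exists>Eh \<subseteq> G. sdsum bdf Eh = sdsum bdf F0"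
proof (induction "card (F0 - G)" arbitrary: F0 rule: less_induct)
  case less
  show ?case
  proof (cases "F0 \<subseteq> G")
    case False
    then obtain f where f: "f \<in> F0" "f \<notin> G" by blast
    with cover less.prems obtain S where S: "x_stab V bdv S" "f \<in> S" "S \<subseteq> insert f G"
      unfolding covered_by_def by blast
    define F1 where "F1 = symdiff F0 S"
    have "S \<subseteq> F" using S(1) by (rule x_stab_subset)
    then have F1: "F1 \<subseteq> F" "sdsum bdf F1 = sdsum bdf F0"
      using less.prems sdsum_bdf_symdiff[of F0 S] x_stab_boundary[OF S(1)]
      by (auto simp: F1_def symdiff_def)
    have "F1 - G \<subset> F0 - G" using f S by (auto simp: F1_def symdiff_def)
    moreover have "finite (F0 - G)"
      using finite_subset[of "F0 - G" F] less.prems finite_faces by blast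
    ultimately have "card (F1 - G) < card (F0 - G)" by (simp add: psubset_card_mono)
    then show ?thesis using less.hyps F1 by metis
  qed blast
qed

end

section \<open>Cut sets\<close>

locale closed_cell_complex = cell_complex +
  assumes faces_nonempty: "F \<noteq> {}"
    \<comment> \<open>without faces there are no face paths, and every set of faces is a cut set once V is nonempty\<close>
    and two_volumes: "f \<in> F \<Longrightarrow> card {v \<in> V. f \<in> bdv v} = 2"
    and dual_connected: "v \<in> V \<Longrightarrow> w \<in> V \<Longrightarrow>
       (v, w) \<in> {(a, b). a \<in> V \<and> b \<in> V \<and> (\<exists>f\<in>F. f \<in> bdv a \<and> f \<in> bdv b)}\<^sup>*"
begin

lemma face_between_in_coboundary:
  assumes W: "W \<subseteq> V" and "a \<in> W" "b \<in> V - W" "f \<in> bdv a" "f \<in> bdv b"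
  shows "f \<in> sdsum bdv W"
proof -
  have "f \<in> F" using assms bdv_subset by blast
  have "a \<noteq> b" using assms by blast
  then have "{a, b} \<subseteq> {v \<in> V. f \<in> bdv v}" "card {a, b} = card {v \<in> V. f \<in> bdv v}"
    using assms two_volumes[OF \<open>f \<in> F\<close>] by auto
  then have "{v \<in> V. f \<in> bdv v} = {a, b}"
    using card_subset_eq[of "{v \<in> V. f \<in> bdv v}" "{a, b}"] finite_volumes by auto
  then have "{v \<in> W. f \<in> bdv v} = {a}" using assms by blast
  then show ?thesis by (simp add: sdsum_def)
qed

lemma coboundary_face_between:
  assumes W: "W \<subseteq> V" and f: "f \<in> sdsum bdv W"
  obtains a b where "a \<in> W" "b \<in> V - W" "f \<in> bdv a" "f \<in> bdv b"
proof -
  let ?Q = "{v \<in> V. f \<in> bdv v}"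
  obtain a where "a \<in> W" "f \<in> bdv a" using sdsum_subset_UN[of bdv W] f by blast
  then have "f \<in> F" using W bdv_subset by blast
  have "{v \<in> W. f \<in> bdv v} = ?Q \<inter> W" using W by blast
  then have "odd (card (?Q \<inter> W))" using f by (simp add: sdsum_def)
  then have "?Q \<inter> W \<noteq> ?Q" using two_volumes[OF \<open>f \<in> F\<close>] by auto
  then obtain b where "b \<in> V - W" "f \<in> bdv b" by blast
  with \<open>a \<in> W\<close> \<open>f \<in> bdv a\<close> show thesis using that by blast
qed

lemma coboundary_empty_imp_all:
  assumes W: "W \<subseteq> V" "W \<noteq> {}" and empty: "sdsum bdv W = {}"
  shows "W = V"
proof -
  obtain v where "v \<in> W" using W by blast
  have "w \<in> W" if "w \<in> V" for w
  proof -
    have "(v, w) \<in> {(a, b). a \<in> V \<and> b \<in> V \<and> (\<exists>f\<in>F. f \<in> bdv a \<and> f \<in> bdv b)}\<^sup>*"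
      using dual_connected \<open>v \<in> W\<close> W(1) that by blast
    then show ?thesis
    proof (induction rule: rtrancl_induct)
      case (step a b)
      then obtain f where "f \<in> bdv a" "f \<in> bdv b" "b \<in> V" by blast
      then show ?case using face_between_in_coboundary[OF W(1) step.IH] empty by blast
    qed (fact \<open>v \<in> W\<close>)
  qed
  then show ?thesis using W by blast
qed

lemma bdv_nonempty:
  assumes "v \<in> V"
  shows "bdv v \<noteq> {}"
proof
  assume empty: "bdv v = {}"
  then have "V = {v}" using coboundary_empty_imp_all[of "{v}"] assms by simp
  obtain f where "f \<in> F" using faces_nonempty by blast
  then have "card {u \<in> V. f \<in> bdv u} = 2" by (rule two_volumes)
  moreover have "{u \<in> V. f \<in> bdv u} = {}" using \<open>V = {v}\<close> empty by blast
  ultimately show False by simp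
qed

lemma face_path_avoiding_coboundary:
  assumes W: "W \<subseteq> V"
  shows "face_path F V bdv fs vs \<Longrightarrow> set fs \<inter> sdsum bdv W = {} \<Longrightarrow> a \<in> W \<Longrightarrow> hd fs \<in> bdv a \<Longrightarrow>
    b \<in> V \<Longrightarrow> last fs \<in> bdv b \<Longrightarrow> b \<in> W"
proof (induction vs arbitrary: fs a)
  case Nil
  then obtain f where "fs = [f]" by (auto simp: face_path_Nil)
  then show ?case using Nil face_between_in_coboundary[OF W, of a b f] by auto
next
  case (Cons u vs)
  then obtain f fs' where fs: "fs = f # fs'" by (cases fs) (auto simp: face_path_def)
  with Cons.prems have "u \<in> W"
    using face_between_in_coboundary[OF W, of a u f] by (auto simp: face_path_Cons)
  moreover have "fs' \<noteq> []" using Cons.prems(1) fs by (auto simp: face_path_Cons dest: face_path_nonempty)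
  ultimately show ?case using Cons.IH[of fs' u] Cons.prems fs by (auto simp: face_path_Cons)
qed

lemma coboundary_imp_cut_set:
  assumes W: "W \<subseteq> V" "sdsum bdv W \<noteq> {}" and K: "sdsum bdv W \<subseteq> K"
  shows "is_cut_set F V bdv K"
proof -
  obtain f where "f \<in> sdsum bdv W" using W by blast
  then obtain a b where ab: "a \<in> W" "b \<in> V - W" "f \<in> bdv a" "f \<in> bdv b"
    using coboundary_face_between W by blast
  have "set fs \<inter> K \<noteq> {}"
    if "face_path F V bdv fs vs" "hd fs \<in> bdv a" "last fs \<in> bdv b" for fs vs
    using face_path_avoiding_coboundary[OF W(1) that(1) _ ab(1) that(2) _ that(3)] ab(2) K by blast
  then show ?thesis unfolding is_cut_set_def using ab W(1) by blast
qed

definition dual_adjacent_avoiding where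
  "dual_adjacent_avoiding K a b \<longleftrightarrow> a \<in> V \<and> b \<in> V \<and> (\<exists>f. f \<notin> K \<and> f \<in> bdv a \<and> f \<in> bdv b)"

lemma walk_imp_face_path:
  assumes "rtrancl_path (dual_adjacent_avoiding K) v xs w" and "xs \<noteq> []" "distinct xs"
  shows "\<exists>fs. face_path F V bdv fs (butlast xs) \<and> hd fs \<in> bdv v \<and> last fs \<in> bdv w \<and>
    set fs \<inter> K = {}"
  using assms
proof induction
  case (step x y ys z)
  then obtain g where g: "g \<notin> K" "g \<in> bdv x" "g \<in> bdv y" "y \<in> V"
    by (auto simp: dual_adjacent_avoiding_def)
  then have "g \<in> F" using bdv_subset by blast
  show ?case
  proof (cases "ys = []")
    case True
    then have "y = z" using step.hyps(2) by (auto elim: rtrancl_path.cases)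
    then show ?thesis using g \<open>g \<in> F\<close> True by (intro exI[of _ "[g]"]) (simp add: face_path_Nil)
  next
    case False
    then obtain fs where fs: "face_path F V bdv fs (butlast ys)" "hd fs \<in> bdv y"
      "last fs \<in> bdv z" "set fs \<inter> K = {}"
      using step.IH step.prems(2) by auto
    moreover have "y \<notin> set (butlast ys)" using step.prems(2) by (auto dest: in_set_butlastD)
    moreover have "fs \<noteq> []" using fs(1) by (rule face_path_nonempty)
    ultimately show ?thesis using g \<open>g \<in> F\<close> False
      by (intro exI[of _ "g # fs"]) (simp add: face_path_Cons)
  qed
qed simp

lemma reachable_imp_face_path:
  assumes "(dual_adjacent_avoiding K)\<^sup>*\<^sup>* v w" "v \<in> V" "\<not> bdv v \<subseteq> K"
  shows "\<exists>fs vs. face_path F V bdv fs vs \<and> hd fs \<in> bdv v \<and> last fs \<in> bdv w \<and>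
    v \<notin> set vs \<and> w \<notin> set vs \<and> set fs \<inter> K = {}"
proof -
  obtain xs where "rtrancl_path (dual_adjacent_avoiding K) v xs w"
    using assms(1) by (auto simp: rtranclp_eq_rtrancl_path)
  then obtain xs where path: "rtrancl_path (dual_adjacent_avoiding K) v xs w" "distinct (v # xs)"
    by (rule rtrancl_path_distinct)
  show ?thesis
  proof (cases "xs = []")
    case True
    then have "v = w" using path(1) by (auto elim: rtrancl_path.cases)
    obtain g where "g \<in> bdv v" "g \<notin> K" using assms(3) by blast
    then show ?thesis using \<open>v = w\<close> assms(2) bdv_subset
      by (intro exI[of _ "[g]"] exI[of _ "[]"]) (auto simp: face_path_Nil)
  next
    case False
    then obtain fs where "face_path F V bdv fs (butlast xs)" "hd fs \<in> bdv v" "last fs \<in> bdv w"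
      "set fs \<inter> K = {}"
      using walk_imp_face_path[OF path(1) False] path(2) by auto
    moreover have "v \<notin> set (butlast xs)" using path(2) by (auto dest: in_set_butlastD)
    moreover have "distinct (butlast xs @ [last xs])" using path(2) False by simp
    then have "w \<notin> set (butlast xs)" using rtrancl_path_last[OF path(1) False] by simp
    ultimately show ?thesis by blast
  qed
qed

text \<open>The volumes reachable from one end of the blocked face paths without crossing K form a set
  whose coboundary lies in K; were it empty, the set would contain all volumes, and a walk to the
  other end would give a face path avoiding K.\<close>

lemma cut_set_imp_coboundary:
  assumes "is_cut_set F V bdv K"
  shows "\<exists>W \<subseteq> V. sdsum bdv W \<noteq> {} \<and> sdsum bdv W \<subseteq> K"
proof (rule ccontr)
  assume none: "\<not> ?thesis"
  from assms obtain v w where vw: "v \<in> V" "w \<in> V" and blocked: "\<forall>fs vs. face_path F V bdv fs vs \<and>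
      hd fs \<in> bdv v \<and> last fs \<in> bdv w \<and> v \<notin> set vs \<and> w \<notin> set vs \<longrightarrow> set fs \<inter> K \<noteq> {}"
    unfolding is_cut_set_def by blast
  define W where "W = {u \<in> V. (dual_adjacent_avoiding K)\<^sup>*\<^sup>* v u}"
  have W: "W \<subseteq> V" "v \<in> W" using vw by (auto simp: W_def)
  have "sdsum bdv W \<subseteq> K"
  proof
    fix f assume "f \<in> sdsum bdv W"
    then obtain a b where ab: "a \<in> W" "b \<in> V - W" "f \<in> bdv a" "f \<in> bdv b"
      using coboundary_face_between W(1) by blast
    show "f \<in> K"
    proof (rule ccontr)
      assume "f \<notin> K"
      then have "dual_adjacent_avoiding K a b"
        using ab W(1) by (auto simp: dual_adjacent_avoiding_def)
      moreover have "(dual_adjacent_avoiding K)\<^sup>*\<^sup>* v a" using ab(1) by (simp add: W_def)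
      ultimately have "(dual_adjacent_avoiding K)\<^sup>*\<^sup>* v b" by simp
      then show False using ab(2) by (simp add: W_def)
    qed
  qed
  then have "sdsum bdv W = {}" using none W(1) by blast
  then have "W = V" using coboundary_empty_imp_all W by blast
  then have "(dual_adjacent_avoiding K)\<^sup>*\<^sup>* v w" using vw(2) unfolding W_def by blast
  moreover have "\<not> bdv v \<subseteq> K"
  proof
    assume "bdv v \<subseteq> K"
    then have "{v} \<subseteq> V \<and> sdsum bdv {v} \<noteq> {} \<and> sdsum bdv {v} \<subseteq> K"
      using vw(1) bdv_nonempty[OF vw(1)] by simp
    then show False using none by blast
  qed
  ultimately show False using reachable_imp_face_path[of K v w] vw(1) blocked by blast
qed

lemma is_cut_set_iff: "is_cut_set F V bdv K \<longleftrightarrow> (\<exists>S. x_stab V bdv S \<and> S \<noteq> {} \<and> S \<subseteq> K)"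
proof
  assume "is_cut_set F V bdv K"
  from cut_set_imp_coboundary[OF this]
  obtain W where W: "W \<subseteq> V \<and> sdsum bdv W \<noteq> {} \<and> sdsum bdv W \<subseteq> K" by blast
  then have "x_stab V bdv (sdsum bdv W)" unfolding x_stab_def by (intro exI[of _ W]) simp
  with W show "\<exists>S. x_stab V bdv S \<and> S \<noteq> {} \<and> S \<subseteq> K" by blast
next
  assume "\<exists>S. x_stab V bdv S \<and> S \<noteq> {} \<and> S \<subseteq> K"
  then obtain S W where "W \<subseteq> V" "S = sdsum bdv W" "S \<noteq> {}" "S \<subseteq> K"
    unfolding x_stab_def by blast
  then have "W \<subseteq> V" "sdsum bdv W \<noteq> {}" "sdsum bdv W \<subseteq> K" by simp_all
  then show "is_cut_set F V bdv K" by (rule coboundary_imp_cut_set)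
qed

lemma artificial_boundary_not_cut_set:
  assumes "artificial_boundary F V bdv k Lx Xb"
  shows "\<not> is_cut_set F V bdv Xb"
proof
  assume "is_cut_set F V bdv Xb"
  then obtain S where "x_stab V bdv S" "S \<noteq> {}" "S \<subseteq> Xb" unfolding is_cut_set_iff by blast
  then show False using assms unfolding artificial_boundary_def by blast
qed

lemma solutions_differ_within_artificial_boundary:
  assumes basis: "x_logical_basis F V bdf bdv k Lx" and ab: "artificial_boundary F V bdv k Lx Xb"
    and G: "Xb \<subseteq> G" "G \<subseteq> F" "\<not> is_cut_set F V bdv G"
    and E: "E1 \<subseteq> G" "E2 \<subseteq> G" "sdsum bdf E1 = sdsum bdf E2"
  shows "symdiff E1 E2 \<subseteq> Xb"
proof -
  let ?D = "symdiff E1 E2"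
  have "?D \<subseteq> F" "sdsum bdf ?D = {}"
    using E G sdsum_bdf_symdiff[of E1 E2] by (auto simp: symdiff_def)
  then obtain R where R: "R \<subseteq> Xb" "x_stab V bdv (symdiff ?D R)"
    by (rule cycle_equiv_subset_artificial_boundary[OF basis ab])
  have "symdiff ?D R \<subseteq> G" using R(1) G(1) E(1,2) by (auto simp: symdiff_def)
  with R(2) G(3) have "symdiff ?D R = {}" unfolding is_cut_set_iff by blast
  then show ?thesis using R(1) by (auto simp: symdiff_def)
qed

end

section \<open>Procedure P5\<close>

lemma p5_scan_fst_mono: "fst st \<subseteq> fst (p5_scan iscut bdf Xb fs st)"
proof (induction fs arbitrary: st)
  case (Cons f fs)
  let ?st1 = "if \<not> iscut (Xb \<union> fst st \<union> {f}) then (fst st \<union> {f}, snd st \<union> bdf f) else st"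
  have "fst st \<subseteq> fst ?st1" by auto
  also have "\<dots> \<subseteq> fst (p5_scan iscut bdf Xb fs ?st1)" by (rule Cons.IH)
  finally show ?case by simp
qed simp

lemma p5_scan_fst_subset: "fst (p5_scan iscut bdf Xb fs st) \<subseteq> fst st \<union> set fs"
proof (induction fs arbitrary: st)
  case (Cons f fs)
  let ?st1 = "if \<not> iscut (Xb \<union> fst st \<union> {f}) then (fst st \<union> {f}, snd st \<union> bdf f) else st"
  have "fst (p5_scan iscut bdf Xb fs ?st1) \<subseteq> fst ?st1 \<union> set fs" by (rule Cons.IH)
  also have "\<dots> \<subseteq> fst st \<union> set (f # fs)" by auto
  finally show ?case by simp
qed simp

lemma p5_reach_subset: "p5_reach F V bdf bdv SE Xb s \<Longrightarrow> fst (snd s) \<subseteq> F - Xb"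
proof (induction rule: p5_reach.induct)
  case (step U Ee B fs Ee' B')
  then show ?case
    using p5_scan_fst_subset[of "is_cut_set F V bdv" bdf Xb fs "(Ee, {})"] by auto
qed simp

lemma p5_output_subset: "p5_output F V bdf bdv SE Xb Eout \<Longrightarrow> Eout \<subseteq> F - Xb"
  unfolding p5_output_def using p5_reach_subset by fastforce

context closed_cell_complex
begin

lemma covered_by_if_cut_set_insert:
  assumes "\<not> is_cut_set F V bdv K" "is_cut_set F V bdv (insert f K)"
  shows "covered_by K f"
proof -
  from assms(2) obtain S where S: "x_stab V bdv S" "S \<noteq> {}" "S \<subseteq> insert f K"
    unfolding is_cut_set_iff by blast
  have "f \<in> S"
  proof (rule ccontr)
    assume "f \<notin> S"
    then have "S \<subseteq> K" using S(3) by blast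
    with S(1,2) have "is_cut_set F V bdv K" unfolding is_cut_set_iff by blast
    with assms(1) show False by contradiction
  qed
  with S show ?thesis unfolding covered_by_def by blast
qed

lemma p5_scan_invariant:
  assumes "\<not> is_cut_set F V bdv (Xb \<union> fst st)"
  shows "\<not> is_cut_set F V bdv (Xb \<union> fst (p5_scan (is_cut_set F V bdv) bdf Xb fs st)) \<and>
    (\<forall>f\<in>set fs. covered_by (Xb \<union> fst (p5_scan (is_cut_set F V bdv) bdf Xb fs st)) f)"
  using assms
proof (induction fs arbitrary: st)
  case (Cons f fs)
  let ?st1 = "if \<not> is_cut_set F V bdv (Xb \<union> fst st \<union> {f})
    then (fst st \<union> {f}, snd st \<union> bdf f) else st"
  let ?st' = "p5_scan (is_cut_set F V bdv) bdf Xb fs ?st1"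
  have st1: "\<not> is_cut_set F V bdv (Xb \<union> fst ?st1) \<and> covered_by (Xb \<union> fst ?st1) f"
  proof (cases "is_cut_set F V bdv (insert f (Xb \<union> fst st))")
    case True
    then show ?thesis using Cons.prems covered_by_if_cut_set_insert[OF Cons.prems True] by simp
  next
    case False
    then show ?thesis by (simp add: covered_by_def)
  qed
  then have IH: "\<not> is_cut_set F V bdv (Xb \<union> fst ?st') \<and> (\<forall>g\<in>set fs. covered_by (Xb \<union> fst ?st') g)"
    using Cons.IH by blast
  have "Xb \<union> fst ?st1 \<subseteq> Xb \<union> fst ?st'" using p5_scan_fst_mono[of ?st1] by blast
  then have "covered_by (Xb \<union> fst ?st') f" using st1 covered_by_mono by blast
  with IH show ?case by simp
qed simp

lemma p5_reach_invariant:
  assumes "\<not> is_cut_set F V bdv Xb" and "p5_reach F V bdf bdv SE Xb s"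
  shows "\<not> is_cut_set F V bdv (Xb \<union> fst (snd s)) \<and> (\<forall>f\<in>fst s. covered_by (Xb \<union> fst (snd s)) f)"
  using assms(2)
proof induction
  case init
  then show ?case using assms(1) by simp
next
  case (step U Ee B fs Ee' B')
  have "Xb \<union> Ee \<subseteq> Xb \<union> Ee'"
    using p5_scan_fst_mono[of "(Ee, {})" "is_cut_set F V bdv" bdf Xb fs] step.hyps(5) by auto
  moreover have "\<not> is_cut_set F V bdv (Xb \<union> Ee') \<and> (\<forall>f\<in>set fs. covered_by (Xb \<union> Ee') f)"
    using p5_scan_invariant[of Xb "(Ee, {})" fs] step.IH step.hyps(5) by simp
  ultimately show ?case using step.IH covered_by_mono by auto
qed

lemma p5_output_covers:
  assumes "\<not> is_cut_set F V bdv Xb" "p5_output F V bdf bdv SE Xb Eout"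
  shows "\<not> is_cut_set F V bdv (Eout \<union> Xb) \<and> (\<forall>f\<in>F. covered_by (Eout \<union> Xb) f)"
proof -
  from assms(2) obtain U B where reach: "p5_reach F V bdf bdv SE Xb (U, Eout, B)" and "F - Xb \<subseteq> U"
    unfolding p5_output_def by blast
  moreover have "covered_by (Eout \<union> Xb) f" if "f \<in> Xb" for f
    using that by (simp add: covered_by_def)
  ultimately show ?thesis using p5_reach_invariant[OF assms(1) reach] by (auto simp: Un_commute)
qed

end

theorem theorem2:
  fixes P :: "'p set" and E :: "'e set" and F :: "'f set" and V :: "'v set"
    and bde :: "'e \<Rightarrow> 'p set" and bdf :: "'f \<Rightarrow> 'e set" and bdv :: "'v \<Rightarrow> 'f set"
    and k :: nat and Lx :: "nat \<Rightarrow> 'f set" and Xb :: "'f set"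
    and F0 :: "'f set" and SE :: "'e set" and Eout :: "'f set"
  assumes cx: "periodic_cell_complex P E F V bde bdf bdv"
    and basis: "x_logical_basis F V bdf bdv k Lx"
    and ab: "artificial_boundary F V bdv k Lx Xb"
    and F0: "F0 \<subseteq> F" and SE: "SE = sdsum bdf F0"
    and out: "p5_output F V bdf bdv SE Xb Eout"
  shows "(\<exists>Eh \<subseteq> Eout \<union> Xb. sdsum bdf Eh = SE) \<and>
         (\<forall>E1 E2. E1 \<subseteq> Eout \<union> Xb \<longrightarrow> E2 \<subseteq> Eout \<union> Xb \<longrightarrow>
             sdsum bdf E1 = SE \<longrightarrow> sdsum bdf E2 = SE \<longrightarrow> symdiff E1 E2 \<subseteq> Xb)"
proof -
  have G: "Eout \<union> Xb \<subseteq> F"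
    using p5_output_subset[OF out] artificial_boundary_subset[OF ab] by blast
  show ?thesis
  proof (cases "F = {}")
    case True
    with G F0 SE show ?thesis by (simp add: symdiff_def)
  next
    case False
    interpret closed_cell_complex F V bdf bdv
      using cx False unfolding periodic_cell_complex_def by unfold_locales auto
    obtain noncut: "\<not> is_cut_set F V bdv (Eout \<union> Xb)" and cover: "\<forall>f\<in>F. covered_by (Eout \<union> Xb) f"
      using p5_output_covers[OF artificial_boundary_not_cut_set[OF ab] out] by blast
    have "\<exists>Eh \<subseteq> Eout \<union> Xb. sdsum bdf Eh = SE"
      using boundary_within_cover[OF G] cover F0 SE by blast
    moreover have "symdiff E1 E2 \<subseteq> Xb"
      if "E1 \<subseteq> Eout \<union> Xb" "E2 \<subseteq> Eout \<union> Xb" "sdsum bdf E1 = SE" "sdsum bdf E2 = SE" for E1 E2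
      using solutions_differ_within_artificial_boundary[OF basis ab Un_upper2 G noncut] that by simp
    ultimately show ?thesis by blast
  qed
qed

end
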